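(* Fix $c\in(0,1]$. For a function $W:\mathbb{N}\to\mathbb{R}$ and an integer $n\ge 2$, say $W$ is admissible with curvature at most $c$ (relative to $n$) if $W(0)=0$, $W(x)>0$ for all $x\ge1$, $W$ is nondecreasing and concave on $\{0,1,2,\dots\}$, and $1-\frac{W(n)-W(n-1)}{W(1)}\le c$. (a) For every $n\ge 2$, consider the utility mechanism that assigns to every resource $r$ with welfare function $W_r$ the local utility function $$F_r(x)=\sum_{k=1}^n \eta_k(W_r)\,F^c_k(x),\qquad x=1,\dots,n,$$ where $\eta_1(W)=[2W(1)-W(2)]/c$, $\eta_k(W)=[2W(k)-W(k-1)-W(k+1)]/c$ for $k=2,\dots,n-1$, $\eta_n(W)=W(1)-\sum_{k=1}^{n-1}\eta_k(W)$, and $F^c_k$ is the function defined by $F^c_k(1)=1$ and, for $x\ge1$, $$F^c_k(x+1)=\max\Big\{\tfrac1k\big[xF^c_k(x)-V^c_k(x)\rho_k\big]+1,\;1-c\Big\},\qquad \rho_k=\Big(1-c\,\tfrac{k^ke^{-k}}{k!}\Big)^{-1},$$ with $V^c_k(x)=(1-c)x+c\min\{x,k\}$. Then every resource allocation game with at most $n$ players whose welfare functions are all admissible with curvature at most $c$ (relative to $n$), equipped with this mechanism, has price of anarchy at least $1-c/e$. (b) Conversely, for every utility mechanism $\mathcal{F}$, the infimum of the price of anarchy over all resource allocation games (with any finite number of players $n$) whose welfare functions are admissible with curvature at most $c$ (relative to their number of players) is at most $1-c/e$. Hence the best achievable price of anarchy over this class is exactly $1-c/e$.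
   Context: A resource allocation game consists of a finite player set $N=\{1,\dots,n\}$, a finite resource set $\mathcal{R}$, action sets $\mathcal{A}_i\subseteq 2^{\mathcal{R}}$ for each $i\in N$, welfare functions $W_r:\mathbb{N}\to\mathbb{R}$ and local utility functions $F_r:\mathbb{N}\to\mathbb{R}$ for $r\in\mathcal{R}$. For an allocation $a=(a_1,\dots,a_n)\in\mathcal{A}=\prod_i\mathcal{A}_i$, let $|a|_r=|\{i\in N: r\in a_i\}|$. The system welfare is $W(a)=\sum_{r\in\cup_i a_i}W_r(|a|_r)$ and player $i$'s utility is $U_i(a)=\sum_{r\in a_i}F_r(|a|_r)$. A pure Nash equilibrium is an $a^{ne}\in\mathcal{A}$ with $U_i(a^{ne})\ge U_i(a_i,a^{ne}_{-i})$ for all $a_i\in\mathcal{A}_i$, $i\in N$. The price of anarchy of a game $G$ is $\mathrm{PoA}(G)=\min_{a\in\mathrm{NE}(G)}W(a)/\max_{a\in\mathcal{A}}W(a)$, and of a set of games is the infimum over the set. A utility mechanism is a map $\mathcal{F}$ assigning to each welfare function $W_r$ a local utility function $F_r=\mathcal{F}(W_r)$. *)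

theory Defs
  imports Complex_Main
begin

text \<open>Players are 0,...,n-1. An allocation is a function from players to sets of
resources, with the empty set outside the player range (canonical representative).\<close>

definition is_game :: "nat \<Rightarrow> 'r set \<Rightarrow> (nat \<Rightarrow> 'r set set) \<Rightarrow> bool" where
  "is_game n R A \<longleftrightarrow> finite R \<and> (\<forall>i<n. A i \<noteq> {} \<and> A i \<subseteq> Pow R)"

definition allocs :: "nat \<Rightarrow> (nat \<Rightarrow> 'r set set) \<Rightarrow> (nat \<Rightarrow> 'r set) set" where
  "allocs n A = {a. (\<forall>i<n. a i \<in> A i) \<and> (\<forall>i\<ge>n. a i = {})}"

definition load :: "nat \<Rightarrow> (nat \<Rightarrow> 'r set) \<Rightarrow> 'r \<Rightarrow> nat" where
  "load n a r = card {i. i < n \<and> r \<in> a i}"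

definition welfare :: "nat \<Rightarrow> ('r \<Rightarrow> nat \<Rightarrow> real) \<Rightarrow> (nat \<Rightarrow> 'r set) \<Rightarrow> real" where
  "welfare n W a = (\<Sum>r\<in>(\<Union>i<n. a i). W r (load n a r))"

definition utility :: "nat \<Rightarrow> ('r \<Rightarrow> nat \<Rightarrow> real) \<Rightarrow> (nat \<Rightarrow> 'r set) \<Rightarrow> nat \<Rightarrow> real" where
  "utility n F a i = (\<Sum>r\<in>a i. F r (load n a r))"

definition is_NE :: "nat \<Rightarrow> (nat \<Rightarrow> 'r set set) \<Rightarrow> ('r \<Rightarrow> nat \<Rightarrow> real) \<Rightarrow> (nat \<Rightarrow> 'r set) \<Rightarrow> bool" where
  "is_NE n A F a \<longleftrightarrow> a \<in> allocs n A \<and>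
     (\<forall>i<n. \<forall>ai\<in>A i. utility n F (a(i := ai)) i \<le> utility n F a i)"

definition admissible :: "real \<Rightarrow> nat \<Rightarrow> (nat \<Rightarrow> real) \<Rightarrow> bool" where
  "admissible c n W \<longleftrightarrow> W 0 = 0 \<and> (\<forall>x\<ge>1. W x > 0) \<and> mono W \<and>
     (\<forall>x. W (x + 2) - W (x + 1) \<le> W (x + 1) - W x) \<and>
     1 - (W n - W (n - 1)) / W 1 \<le> c"

definition rho :: "real \<Rightarrow> nat \<Rightarrow> real" where
  "rho c k = inverse (1 - c * (real k ^ k * exp (- real k) / fact k))"

definition Vc :: "real \<Rightarrow> nat \<Rightarrow> nat \<Rightarrow> real" where
  "Vc c k x = (1 - c) * real x + c * real (min x k)"

text \<open>F^c_k(1) = 1 and the recursion for x \<ge> 1; the value at 0 is irrelevant (set to 0).\<close>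
fun Fc :: "real \<Rightarrow> nat \<Rightarrow> nat \<Rightarrow> real" where
  "Fc c k 0 = 0"
| "Fc c k (Suc 0) = 1"
| "Fc c k (Suc (Suc x)) =
     max ((1 / real k) * (real (Suc x) * Fc c k (Suc x) - Vc c k (Suc x) * rho c k) + 1) (1 - c)"

definition eta0 :: "real \<Rightarrow> (nat \<Rightarrow> real) \<Rightarrow> nat \<Rightarrow> real" where
  "eta0 c W k = (if k = 1 then (2 * W 1 - W 2) / c
                 else (2 * W k - W (k - 1) - W (k + 1)) / c)"

definition eta :: "real \<Rightarrow> nat \<Rightarrow> (nat \<Rightarrow> real) \<Rightarrow> nat \<Rightarrow> real" where
  "eta c n W k = (if k = n then W 1 - (\<Sum>j=1..n-1. eta0 c W j) else eta0 c W k)"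

definition mech :: "real \<Rightarrow> nat \<Rightarrow> (nat \<Rightarrow> real) \<Rightarrow> nat \<Rightarrow> real" where
  "mech c n W x = (\<Sum>k=1..n. eta c n W k * Fc c k x)"

end

theory Submission
  imports Defs "HOL-Library.Nat_Bijection"
begin

text \<open>
  Part (a) is a smoothness argument. On \<open>{0..n}\<close> an admissible \<open>W\<close> is a nonnegative combination
  \<open>\<Sum>\<^sub>k \<eta>\<^sub>k V\<^sup>c\<^sub>k\<close> of the welfare functions \<open>V\<^sup>c\<^sub>k\<close>, and the mechanism takes the same combination
  of the \<open>F\<^sup>c\<^sub>k\<close>. Each pair satisfies \<open>V(y + z) + x F(x + y) - z F(x + y + 1) \<le> \<rho>\<^sub>k V(x + y)\<close>,
  which follows from a closed form of \<open>F\<^sup>c\<^sub>k\<close> in terms of the partial sums of the series of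
  \<open>e\<^sup>k\<close>, and \<open>\<rho>\<^sub>k \<le> (1 - c / e)\<^sup>-\<^sup>1\<close> because \<open>k\<^sup>k e\<^sup>-\<^sup>k / k! \<le> 1 / e\<close>. Summing over the resources,
  with \<open>x\<close>, \<open>y\<close>, \<open>z\<close> the numbers of players using a resource only at the equilibrium, at both
  profiles, and only at the other profile, the utility terms add up to the gains of the
  unilateral deviations, which are nonpositive.

  Part (b) uses \<open>W(x) = (1 - c) x + c\<close> for \<open>x \<ge> 1\<close>. Let \<open>f\<close> be the utility function that a
  mechanism assigns to it and \<open>s\<close> slightly above \<open>1 - c / e\<close>. If \<open>f(1) \<le> 0\<close>, a trivial game has an
  equilibrium of welfare \<open>0\<close>. If \<open>j f(j) - f(j + 1) \<ge> (W(j) / s - 1) f(1)\<close> for some \<open>j\<close>, a cyclic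
  game has welfare ratio about \<open>s\<close>. Otherwise \<open>f\<close> grows like \<open>j!\<close>, because
  \<open>\<Sum>\<^sub>i (W(i) / s - 1) / i!\<close> stays below \<open>1\<close>, and in a star game all players crowd a single
  resource instead of using two private ones each.
\<close>

section \<open>Partial sums of the exponential series\<close>

definition exp_term :: "nat \<Rightarrow> nat \<Rightarrow> real" where
  "exp_term k j = real k ^ j / fact j"

definition exp_partial :: "nat \<Rightarrow> nat \<Rightarrow> real" where
  "exp_partial k j = (\<Sum>i<j. exp_term k i)"

lemma exp_term_0 [simp]: "exp_term k 0 = 1"
  by (simp add: exp_term_def)

lemma exp_term_Suc: "exp_term k (Suc j) = exp_term k j * real k / real (Suc j)"
  by (simp add: exp_term_def field_simps)

lemma exp_term_pos: "k \<ge> 1 \<Longrightarrow> exp_term k j > 0"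
  by (simp add: exp_term_def)

lemma exp_term_nonneg: "exp_term k j \<ge> 0"
  by (simp add: exp_term_def)

lemma exp_partial_Suc: "exp_partial k (Suc j) = exp_partial k j + exp_term k j"
  by (simp add: exp_partial_def)

lemma exp_partial_nonneg: "exp_partial k j \<ge> 0"
  by (simp add: exp_partial_def sum_nonneg exp_term_nonneg)

lemma exp_term_sums: "exp_term k sums exp (real k)"
proof -
  have "(\<lambda>n. real k ^ n /\<^sub>R fact n) = exp_term k"
    by (auto simp: exp_term_def scaleR_conv_of_real divide_inverse mult.commute)
  then show ?thesis
    using exp_converges[of "real k"] by simp
qed

lemma exp_partial_le_exp: "exp_partial k j \<le> exp (real k)"
  unfolding exp_partial_def sums_unique[OF exp_term_sums]
  using exp_term_sums exp_term_nonneg by (intro sum_le_suminf) (auto dest: sums_summable)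

lemma exp_tail_le:
  assumes "k \<ge> 1" "l > k"
  shows "exp (real k) - exp_partial k l \<le> exp_term k l * real l / (real l - real k)"
proof -
  define q where "q = real k / real l"
  have q: "0 \<le> q" "q < 1"
    using assms by (auto simp: q_def)
  have summable: "summable (exp_term k)"
    using exp_term_sums sums_summable by blast
  have split: "exp (real k) = (\<Sum>n. exp_term k (n + l)) + exp_partial k l"
    using suminf_split_initial_segment[OF summable, of l] sums_unique[OF exp_term_sums]
    unfolding exp_partial_def by metis
  have geometric: "exp_term k (n + l) \<le> exp_term k l * q ^ n" for n
  proof (induction n)
    case (Suc n)
    have "exp_term k (Suc n + l) = exp_term k (n + l) * (real k / real (Suc (n + l)))"
      by (simp add: exp_term_Suc)
    also have "\<dots> \<le> exp_term k (n + l) * q"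
      using assms exp_term_nonneg[of k "n + l"]
      unfolding q_def by (intro mult_left_mono divide_left_mono) auto
    also have "\<dots> \<le> exp_term k l * q ^ n * q"
      using Suc q by (intro mult_right_mono) auto
    finally show ?case
      by (simp add: algebra_simps)
  qed simp
  have "(\<Sum>n. exp_term k (n + l)) \<le> (\<Sum>n. exp_term k l * q ^ n)"
    using summable_ignore_initial_segment[OF summable, of l] summable_geometric[of q] q
    by (intro suminf_le geometric summable_mult) auto
  also have "\<dots> = exp_term k l * (1 / (1 - q))"
    using suminf_geometric[of q] summable_geometric[of q] q by (simp add: suminf_mult)
  also have "\<dots> = exp_term k l * real l / (real l - real k)"
    using assms by (simp add: q_def field_simps)
  finally show ?thesis
    using split by linarith
qed

lemma exp_partial_mult_le: "exp_partial k (Suc j) * (real k - real j - 1) \<le> real k * exp_term k j"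
proof (induction j)
  case (Suc j)
  have "exp_partial k (Suc (Suc j)) * (real k - real (Suc j) - 1)
     = exp_partial k (Suc j) * (real k - real j - 1) - exp_partial k (Suc j)
       + exp_term k (Suc j) * (real k - real j - 2)"
    by (simp add: exp_partial_Suc algebra_simps)
  also have "\<dots> \<le> real k * exp_term k j + exp_term k (Suc j) * (real k - real j - 2)"
    using Suc exp_partial_nonneg[of k "Suc j"] by linarith
  also have "\<dots> = exp_term k (Suc j) * (real k - 1)"
    using exp_term_Suc[of k j] by (simp add: field_simps)
  also have "\<dots> \<le> real k * exp_term k (Suc j)"
    using exp_term_nonneg[of k "Suc j"] by (simp add: algebra_simps)
  finally show ?case .
qed (simp add: exp_partial_def)

lemma exp_partial_ratio_mono:
  "exp_term k (Suc j) * exp_partial k (Suc j) \<le> exp_term k j * exp_partial k (Suc (Suc j))"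
proof -
  have "exp_term k (Suc j) * exp_partial k (Suc j)
      = exp_term k j * (real k * exp_partial k (Suc j)) / real (Suc j)"
    by (simp add: exp_term_Suc)
  also have "\<dots> \<le> exp_term k j * (real (Suc j) * exp_partial k (Suc j) + real k * exp_term k j) / real (Suc j)"
    using exp_partial_mult_le[of k j] exp_term_nonneg[of k j]
    by (intro divide_right_mono mult_left_mono) (auto simp: algebra_simps)
  also have "\<dots> = exp_term k j * exp_partial k (Suc (Suc j))"
    by (simp add: exp_partial_Suc exp_term_Suc field_simps)
  finally show ?thesis .
qed

lemma exp_term_diag_mult_exp_partial_le:
  assumes "k \<ge> 1" "j \<le> k"
  shows "exp_term k k * exp_partial k (Suc j) \<le> exp (real k) * exp_term k j"
  using assms(2)
proof (induction j rule: inc_induct)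
  case base
  show ?case
    using exp_partial_le_exp[of k "Suc k"] exp_term_nonneg[of k k]
    by (simp add: mult.commute mult_left_mono)
next
  case (step j)
  have "exp_term k (Suc j) * (exp_term k k * exp_partial k (Suc j))
      \<le> exp_term k k * (exp_term k j * exp_partial k (Suc (Suc j)))"
    using mult_left_mono[OF exp_partial_ratio_mono[of k j] exp_term_nonneg[of k k]]
    by (simp add: algebra_simps)
  also have "\<dots> = exp_term k j * (exp_term k k * exp_partial k (Suc (Suc j)))"
    by simp
  also have "\<dots> \<le> exp_term k j * (exp (real k) * exp_term k (Suc j))"
    using step.IH exp_term_nonneg by (intro mult_left_mono) auto
  finally show ?case
    using exp_term_pos[OF assms(1), of "Suc j"] by (simp add: algebra_simps)
qed

lemma exp_term_diag_le: "k \<ge> 1 \<Longrightarrow> exp_term k k \<le> exp (real k - 1)"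
proof (induction k rule: dec_induct)
  case (step k)
  have k: "real k > 0"
    using step by auto
  have "1 + 1 / real k = real (Suc k) / real k"
    using k by (simp add: field_simps)
  then have "exp_term (Suc k) (Suc k) = exp_term k k * (1 + 1 / real k) ^ k"
    using k by (simp add: exp_term_def power_divide del: of_nat_Suc)
  also have "\<dots> \<le> exp (real k - 1) * exp 1"
    using step.IH exp_ge_one_plus_x_over_n_power_n[of k 1] k
    by (intro mult_mono) (auto simp: exp_term_nonneg)
  also have "\<dots> = exp (real (Suc k) - 1)"
    by (simp add: exp_add[symmetric])
  finally show ?case .
qed (simp add: exp_term_def)

lemma exp_term_diag_div_exp_le: "k \<ge> 1 \<Longrightarrow> exp_term k k / exp (real k) \<le> 1 / exp 1"
  using exp_term_diag_le[of k] by (simp add: divide_simps exp_diff mult.commute)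

section \<open>The basis functions \<open>F\<^sup>c\<^sub>k\<close>\<close>

lemma rho_altdef: "rho c k = inverse (1 - c * (exp_term k k / exp (real k)))"
  by (simp add: rho_def exp_term_def exp_minus field_simps)

lemma one_minus_c_div_e_pos:
  fixes c :: real
  assumes "c \<le> 1"
  shows "1 - c / exp 1 > 0"
proof -
  have "1 < exp (1::real)"
    by (rule exp_gt_one) simp
  then have "c < exp 1"
    using assms by linarith
  then show ?thesis
    by (simp add: field_simps)
qed

lemma Vc_eq_small: "y \<le> k \<Longrightarrow> Vc c k y = real y"
  by (simp add: Vc_def algebra_simps)

lemma Vc_eq_large: "y \<ge> k \<Longrightarrow> Vc c k y = (1 - c) * real y + c * real k"
  by (simp add: Vc_def)

lemma Vc_le: "c \<ge> 0 \<Longrightarrow> Vc c k y \<le> real y"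
  by (simp add: Vc_def algebra_simps mult_left_mono)

lemma Vc_nonneg: "0 \<le> c \<Longrightarrow> c \<le> 1 \<Longrightarrow> Vc c k y \<ge> 0"
  by (simp add: Vc_def)

text \<open>\<open>Fc_closed c k j\<close> is the value \<open>F\<^sup>c\<^sub>k(j + 1)\<close>: without the maximum the recursion is
  linear of first order and is solved by partial sums of the series of \<open>e\<^sup>k\<close>; the maximum
  with \<open>1 - c\<close> turns out never to be active.\<close>

definition Fc_closed :: "real \<Rightarrow> nat \<Rightarrow> nat \<Rightarrow> real" where
  "Fc_closed c k j = (if j \<le> k then 1 - (rho c k - 1) * exp_partial k j / exp_term k j
     else rho c k * (1 - c) + (rho c k - 1) * (exp (real k) - exp_partial k (Suc j)) / exp_term k j)"

context
  fixes c :: real and k :: nat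
  assumes k1: "k \<ge> 1" and c0: "0 < c" and c1: "c \<le> 1"
begin

lemma rho_denominator_pos: "1 - c * (exp_term k k / exp (real k)) > 0"
proof -
  have "c * (exp_term k k / exp (real k)) \<le> c / exp 1"
    using mult_left_mono[OF exp_term_diag_div_exp_le[OF k1], of c] c0 by simp
  then show ?thesis
    using one_minus_c_div_e_pos[OF c1] by linarith
qed

lemma rho_ge_1: "rho c k \<ge> 1"
  unfolding rho_altdef using rho_denominator_pos c0 exp_term_nonneg[of k k]
  by (simp add: one_le_inverse)

lemma rho_le: "rho c k \<le> inverse (1 - c / exp 1)"
  unfolding rho_altdef using rho_denominator_pos c0 one_minus_c_div_e_pos[OF c1]
    mult_left_mono[OF exp_term_diag_div_exp_le[OF k1], of c]
  by (intro le_imp_inverse_le) auto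

lemma rho_minus_1: "rho c k - 1 = rho c k * c * (exp_term k k / exp (real k))"
  unfolding rho_altdef using rho_denominator_pos by (simp add: field_simps)

lemma rho_minus_1_mult_exp: "(rho c k - 1) * exp (real k) = rho c k * c * exp_term k k"
  using rho_minus_1 by simp

lemma Fc_closed_ge: "Fc_closed c k j \<ge> 1 - c"
proof (cases "j \<le> k")
  case True
  define P where "P = exp_term k k / exp (real k)"
  have m: "exp_term k j > 0"
    using exp_term_pos k1 by auto
  have "P * (exp_partial k j + exp_term k j) \<le> exp_term k j"
    using exp_term_diag_mult_exp_partial_le[OF k1 True]
    by (simp add: P_def exp_partial_Suc field_simps)
  then have "P * exp_partial k j \<le> exp_term k j * (1 - P)"
    by (simp add: algebra_simps)
  also have "\<dots> \<le> exp_term k j * (1 - c * P)"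
    using m mult_left_le_one_le[of P c] c0 c1 exp_term_nonneg[of k k]
    by (intro mult_left_mono) (auto simp: P_def)
  finally have bound: "P * exp_partial k j \<le> exp_term k j * (1 - c * P)" .
  have "(rho c k - 1) * exp_partial k j = c * rho c k * (P * exp_partial k j)"
    using rho_minus_1 by (simp add: P_def)
  also have "\<dots> \<le> c * rho c k * (exp_term k j * (1 - c * P))"
    using bound c0 rho_ge_1 by (intro mult_left_mono) auto
  also have "\<dots> = c * exp_term k j"
    using rho_denominator_pos unfolding rho_altdef by (simp add: P_def field_simps)
  finally have "(rho c k - 1) * exp_partial k j / exp_term k j \<le> c"
    using m by (simp add: divide_simps mult.commute)
  then show ?thesis
    using True by (simp add: Fc_closed_def)
next
  case False
  have "(rho c k - 1) * (exp (real k) - exp_partial k (Suc j)) / exp_term k j \<ge> 0"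
    using rho_ge_1 exp_term_nonneg exp_partial_le_exp[of k "Suc j"] by auto
  moreover have "rho c k * (1 - c) \<ge> 1 - c"
    using rho_ge_1 c1 by (simp add: mult_le_cancel_right1)
  ultimately show ?thesis
    using False by (simp add: Fc_closed_def)
qed

lemma Fc_closed_large:
  assumes "j \<ge> k"
  shows "Fc_closed c k j = rho c k * (1 - c) + (rho c k - 1) * (exp (real k) - exp_partial k (Suc j)) / exp_term k j"
proof (cases "j = k")
  case True
  then show ?thesis
    using exp_term_pos[OF k1, of k] rho_minus_1_mult_exp
    by (simp add: Fc_closed_def exp_partial_Suc field_simps)
qed (use assms in \<open>simp add: Fc_closed_def\<close>)

lemma Fc_closed_Suc:
  "(1 / real k) * (real (Suc j) * Fc_closed c k j - Vc c k (Suc j) * rho c k) + 1 = Fc_closed c k (Suc j)"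
proof (cases "j < k")
  case True
  then show ?thesis
    using k1 exp_term_pos[OF k1, of j]
    by (simp add: Fc_closed_def Vc_def exp_term_Suc exp_partial_Suc field_simps)
next
  case False
  have linear_step: "(1/x)*(y*(r*(1-c) + (r-1)*(e - t)/(q*y/x)) - ((1-c)*y + c*x)*r) + 1
      = r*(1-c) + (r-1)*(e - t - q)/q" if "q > 0" "x > 0" "y > 0" for r q t e x y :: real
    using that by (simp add: field_simps)
  have "exp_term k j = exp_term k (Suc j) * real (Suc j) / real k"
    using k1 by (simp add: exp_term_Suc)
  then have "Fc_closed c k j = rho c k * (1 - c) + (rho c k - 1) * (exp (real k) - exp_partial k (Suc j))
      / (exp_term k (Suc j) * real (Suc j) / real k)"
    using False by (simp add: Fc_closed_large)
  moreover have "Fc_closed c k (Suc j) = rho c k * (1 - c)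
      + (rho c k - 1) * (exp (real k) - exp_partial k (Suc j) - exp_term k (Suc j)) / exp_term k (Suc j)"
    using False by (simp add: Fc_closed_large exp_partial_Suc[of k "Suc j"] algebra_simps)
  moreover have "Vc c k (Suc j) = (1 - c) * real (Suc j) + c * real k"
    using False by (simp add: Vc_def)
  ultimately show ?thesis
    using k1 exp_term_pos[OF k1, of "Suc j"] by (simp only: linear_step)
qed

lemma Fc_eq_closed: "Fc c k (Suc j) = Fc_closed c k j"
proof (induction j)
  case (Suc j)
  then show ?case
    using Fc_closed_Suc[of j] Fc_closed_ge[of "Suc j"] by simp
qed (simp add: Fc_closed_def exp_partial_def)


lemma Fc_ge: "l \<ge> 1 \<Longrightarrow> Fc c k l \<ge> 1 - c"
  using Fc_eq_closed[of "l - 1"] Fc_closed_ge[of "l - 1"] by simp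

lemma Fc_Suc_ge:
  assumes "l \<ge> 1"
  shows "real k * Fc c k (Suc l) \<ge> real l * Fc c k l - rho c k * Vc c k l + real k"
proof -
  obtain x where x: "l = Suc x"
    using assms by (cases l) auto
  have "Fc c k (Suc l) \<ge> (1 / real k) * (real l * Fc c k l - Vc c k l * rho c k) + 1"
    unfolding x by simp
  then have "real k * Fc c k (Suc l) \<ge> real k * ((1 / real k) * (real l * Fc c k l - Vc c k l * rho c k) + 1)"
    using k1 by (intro mult_left_mono) auto
  then show ?thesis
    using k1 by (simp add: algebra_simps)
qed

lemma Fc_small_load:
  assumes "1 \<le> l" "l < k"
  shows "real k - (real k - real l) * Fc c k (Suc l) \<le> rho c k * real l"
proof -
  obtain j where j: "l = Suc j"
    using assms by (cases l) auto
  have m: "exp_term k l > 0"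
    using exp_term_pos k1 by auto
  have "real l * exp_term k l = real k * exp_term k j"
    by (simp add: j exp_term_Suc)
  moreover have "exp_partial k l * (real k - real l) = exp_partial k (Suc j) * (real k - real j - 1)"
    by (simp add: j)
  ultimately have "exp_partial k l * (real k - real l) \<le> real l * exp_term k l"
    using exp_partial_mult_le[of k j] by simp
  then have "(rho c k - 1) * (exp_partial k l * (real k - real l))
      \<le> (rho c k - 1) * (real l * exp_term k l)"
    using rho_ge_1 by (intro mult_left_mono) auto
  then have a: "(real k - real l) * ((rho c k - 1) * exp_partial k l / exp_term k l) \<le> (rho c k - 1) * real l"
    using m by (simp add: field_simps)
  have F: "Fc c k (Suc l) = 1 - (rho c k - 1) * exp_partial k l / exp_term k l"
    using Fc_eq_closed[of l] assms by (simp add: Fc_closed_def)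
  show ?thesis
    unfolding F using a by (simp add: algebra_simps)
qed

lemma Fc_large_load:
  assumes "l \<ge> k"
  shows "real k + (real l - real k) * Fc c k l \<le> rho c k * Vc c k l"
proof (cases "l = k")
  case True
  then show ?thesis
    using rho_ge_1 Vc_eq_small[of k k c] k1 by simp
next
  case False
  obtain j where j: "l = Suc j" "j \<ge> k"
    using assms False by (cases l) auto
  have m: "exp_term k j > 0"
    using exp_term_pos k1 by auto
  have "(real l - real k) * (exp (real k) - exp_partial k l) \<le> exp_term k l * real l"
    using exp_tail_le[OF k1, of l] j by (simp add: field_simps)
  also have "\<dots> = exp_term k j * real k"
    by (simp add: j exp_term_Suc)
  finally have "(rho c k - 1) * ((real l - real k) * (exp (real k) - exp_partial k l))
      \<le> (rho c k - 1) * (exp_term k j * real k)"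
    using rho_ge_1 by (intro mult_left_mono) auto
  then have a: "(real l - real k) * ((rho c k - 1) * (exp (real k) - exp_partial k l) / exp_term k j)
      \<le> (rho c k - 1) * real k"
    using m by (simp add: field_simps)
  have F: "Fc c k l = rho c k * (1 - c) + (rho c k - 1) * (exp (real k) - exp_partial k l) / exp_term k j"
    using Fc_eq_closed[of j] Fc_closed_large[OF j(2)] j by simp
  show ?thesis
    unfolding F Vc_eq_large[OF assms] using a by (simp add: algebra_simps)
qed

lemma Fc_le_1: "l \<ge> 1 \<Longrightarrow> Fc c k l \<le> 1"
proof (induction l rule: dec_induct)
  case (step l)
  have "real l * Fc c k l \<le> rho c k * Vc c k l"
  proof (cases "l \<le> k")
    case True
    then show ?thesis
      using step.IH rho_ge_1 mult_left_mono[of "Fc c k l" "rho c k" "real l"]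
      by (simp add: Vc_eq_small mult.commute)
  next
    case False
    then show ?thesis
      using Fc_large_load[of l] mult_left_mono[OF step.IH, of "real k"]
      by (simp add: algebra_simps)
  qed
  then have "(1 / real k) * (real l * Fc c k l - Vc c k l * rho c k) + 1 \<le> 1"
    using k1 by (simp add: divide_simps mult.commute)
  then show ?case
    using step c0 by (cases l) auto
qed simp

lemma Fc_large_load_Suc:
  assumes "l \<ge> k"
  shows "real k + (real l - real k + 1) * Fc c k l - Fc c k (Suc l) \<le> rho c k * Vc c k l"
proof -
  have "(real k - 1) * (real k + (real l - real k) * Fc c k l) \<le> (real k - 1) * (rho c k * Vc c k l)"
    using Fc_large_load[OF assms] k1 by (intro mult_left_mono) auto
  then have "real k * (real k + (real l - real k + 1) * Fc c k l - Fc c k (Suc l)) \<le> real k * (rho c k * Vc c k l)"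
    using Fc_Suc_ge[of l] assms k1 by (simp add: algebra_simps)
  then show ?thesis
    using k1 by simp
qed

text \<open>Among the deviators, the worst case for the smoothness inequality below brings the
  joint load exactly to \<open>k\<close>, where \<open>V\<^sup>c\<^sub>k\<close> changes slope.\<close>

lemma Vc_deviation_le:
  assumes "1 - c \<le> f" "f \<le> 1"
  shows "Vc c k (x + b) - real b * f \<le> Vc c k (x + (k - x)) - real (k - x) * f"
proof (cases "b < k - x")
  case True
  then have "(real k - real x - real b) * (1 - f) \<ge> 0"
    using assms by (intro mult_nonneg_nonneg) auto
  then show ?thesis
    using True by (simp add: Vc_eq_small algebra_simps)
next
  case False
  then have "(real b - real (k - x)) * (f - (1 - c)) \<ge> 0"
    using assms by (intro mult_nonneg_nonneg) auto
  then show ?thesis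
    using False by (simp add: Vc_eq_large algebra_simps)
qed

lemma Fc_smooth_large:
  assumes "x \<ge> k"
  shows "Vc c k x + real a * Fc c k (a + x) \<le> rho c k * Vc c k (a + x)"
proof -
  let ?r = "rho c k" and ?f = "Fc c k (a + x)"
  have large: "real k + (real (a + x) - real k) * ?f \<le> ?r * Vc c k (a + x)"
    using Fc_large_load[of "a + x"] assms by simp
  have "(1 - c) * (real x - real k) \<ge> 0"
    using assms c1 by (intro mult_nonneg_nonneg) auto
  then have "Vc c k x \<ge> real k"
    using assms by (simp add: Vc_eq_large algebra_simps)
  then have Vx: "(?r - 1) * real k \<le> (?r - 1) * Vc c k x"
    using rho_ge_1 by (intro mult_left_mono) auto
  show ?thesis
  proof (cases "?f \<le> ?r * (1 - c)")
    case True
    then have "real a * ?f \<le> real a * (?r * (1 - c))"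
      by (intro mult_left_mono) auto
    moreover have "Vc c k x \<le> ?r * Vc c k x"
      using rho_ge_1 Vc_nonneg[of c k x] c0 c1 by (simp add: mult_le_cancel_right1)
    ultimately show ?thesis
      using assms by (simp add: Vc_eq_large algebra_simps)
  next
    case False
    then have "real a * (?f - ?r * (1 - c)) \<le> (real (a + x) - real k) * (?f - ?r * (1 - c))"
      using assms by (intro mult_right_mono) auto
    then show ?thesis
      using large Vx assms by (simp add: Vc_eq_large algebra_simps)
  qed
qed

text \<open>The left-hand side is affine in \<open>x\<close>, so it suffices to check it at \<open>x = 0\<close>, where it is
  the recursion of \<open>F\<^sup>c\<^sub>k\<close>, and at the largest relevant \<open>x\<close>.\<close>

lemma Fc_smooth_small:
  assumes "x < k" "a + x \<ge> 1"
  shows "real k + real a * Fc c k (a + x) - real (k - x) * Fc c k (Suc (a + x)) \<le> rho c k * Vc c k (a + x)"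
proof -
  let ?l = "a + x" and ?r = "rho c k"
  let ?f0 = "Fc c k ?l" and ?f1 = "Fc c k (Suc ?l)"
  define E where "E y = real k + (real ?l - y) * ?f0 - (real k - y) * ?f1" for y :: real
  have lhs: "real k + real a * ?f0 - real (k - x) * ?f1 = E (real x)"
    unfolding E_def using assms by simp
  have E0: "E 0 \<le> ?r * Vc c k ?l"
    using Fc_Suc_ge[OF assms(2)] unfolding E_def by (simp add: algebra_simps)
  have affine: "E y = E 0 + y * (?f1 - ?f0)" for y
    unfolding E_def by (simp add: algebra_simps)
  show ?thesis
    unfolding lhs
  proof (cases "?f1 \<le> ?f0")
    case True
    then have "real x * (?f1 - ?f0) \<le> 0"
      by (simp add: mult_nonneg_nonpos)
    then show "E (real x) \<le> ?r * Vc c k ?l"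
      using E0 affine[of "real x"] by simp
  next
    case False
    show "E (real x) \<le> ?r * Vc c k ?l"
    proof (cases "?l < k")
      case True
      have "real x * (?f1 - ?f0) \<le> real ?l * (?f1 - ?f0)"
        using False by (intro mult_right_mono) auto
      then have "E (real x) \<le> E (real ?l)"
        using affine[of "real x"] affine[of "real ?l"] by linarith
      also have "\<dots> = real k - (real k - real ?l) * ?f1"
        unfolding E_def by simp
      also have "\<dots> \<le> ?r * Vc c k ?l"
        using Fc_small_load[OF assms(2) True] True by (simp add: Vc_eq_small)
      finally show ?thesis .
    next
      case not_small: False
      have "real x * (?f1 - ?f0) \<le> (real k - 1) * (?f1 - ?f0)"
        using False assms by (intro mult_right_mono) auto
      then have "E (real x) \<le> E (real k - 1)"
        using affine[of "real x"] affine[of "real k - 1"] by linarith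
      also have "\<dots> = real k + (real ?l - real k + 1) * ?f0 - ?f1"
        unfolding E_def by simp
      also have "\<dots> \<le> ?r * Vc c k ?l"
        using Fc_large_load_Suc[of ?l] not_small by simp
      finally show ?thesis .
    qed
  qed
qed

lemma Fc_smooth:
  "Vc c k (x + b) + real a * Fc c k (a + x) - real b * Fc c k (Suc (a + x)) \<le> rho c k * Vc c k (a + x)"
proof (cases "a + x = 0")
  case True
  then show ?thesis
    using Vc_le[of c k b] c0 by (simp add: Vc_def)
next
  case False
  then have l: "a + x \<ge> 1"
    by linarith
  have shift: "Vc c k (x + b) - real b * Fc c k (Suc (a + x))
      \<le> Vc c k (x + (k - x)) - real (k - x) * Fc c k (Suc (a + x))"
    using Fc_ge Fc_le_1 by (intro Vc_deviation_le) auto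
  show ?thesis
  proof (cases "x \<ge> k")
    case True
    then show ?thesis
      using shift Fc_smooth_large[OF True, of a] by simp
  next
    case False
    then show ?thesis
      using shift Fc_smooth_small[of x a] l by (simp add: Vc_eq_small)
  qed
qed

end

section \<open>Decomposition of admissible welfare functions\<close>

lemma eta0_eq: "c \<noteq> 0 \<Longrightarrow> W 0 = 0 \<Longrightarrow> j \<ge> 1 \<Longrightarrow> c * eta0 c W j = 2 * W j - W (j - 1) - W (j + 1)"
  by (auto simp: eta0_def numeral_2_eq_2)

lemma sum_eta0_telescope:
  assumes "c \<noteq> 0" "W 0 = 0"
  shows "c * (\<Sum>j=1..i. eta0 c W j) = W 1 - (W (i + 1) - W i)"
proof (induction i)
  case (Suc i)
  then show ?case
    using eta0_eq[of c W "Suc i"] assms by (simp add: distrib_left)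
qed (use assms in simp)

lemma sum_eta: "n \<ge> 1 \<Longrightarrow> (\<Sum>k=1..n. eta c n W k) = W 1"
proof -
  assume "n \<ge> 1"
  then obtain m where m: "n = Suc m"
    by (cases n) auto
  have "(\<Sum>k=1..m. eta c n W k) = (\<Sum>k=1..m. eta0 c W k)"
    using m by (intro sum.cong) (auto simp: eta_def)
  then show ?thesis
    by (simp add: m eta_def)
qed

lemma sum_eta_above:
  assumes "c \<noteq> 0" "W 0 = 0" "y < n"
  shows "c * (\<Sum>k=Suc y..n. eta c n W k) = W (Suc y) - W y - (1 - c) * W 1"
proof -
  have split: "{1..n} = {1..y} \<union> {Suc y..n}"
    using assms by auto
  have "(\<Sum>k=1..y. eta c n W k) = (\<Sum>k=1..y. eta0 c W k)"
    using assms by (intro sum.cong) (auto simp: eta_def)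
  then have "W 1 = (\<Sum>k=1..y. eta0 c W k) + (\<Sum>k=Suc y..n. eta c n W k)"
    using sum_eta[of n c W] assms unfolding split by (simp add: sum.union_disjoint)
  then show ?thesis
    using sum_eta0_telescope[of c W y] assms by (simp add: algebra_simps)
qed

lemma eta_nonneg:
  assumes adm: "admissible c n W" and c: "0 < c" and k: "1 \<le> k" "k \<le> n"
  shows "eta c n W k \<ge> 0"
proof (cases "k = n")
  case True
  have W: "W 0 = 0" "W 1 > 0" "1 - (W n - W (n - 1)) / W 1 \<le> c"
    using adm by (auto simp: admissible_def)
  have "c * (\<Sum>j=1..n-1. eta0 c W j) = W 1 - (W n - W (n - 1))"
    using sum_eta0_telescope[of c W "n - 1"] c W k by simp
  also have "\<dots> \<le> c * W 1"
    using W by (simp add: field_simps)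
  finally show ?thesis
    using True c by (simp add: eta_def)
next
  case False
  have W: "W 0 = 0" "W (k - 1 + 2) - W (k - 1 + 1) \<le> W (k - 1 + 1) - W (k - 1)"
    using adm by (auto simp: admissible_def)
  moreover have "k - 1 + 2 = k + 1" "k - 1 + 1 = k"
    using k by auto
  ultimately have "c * eta0 c W k \<ge> 0"
    using eta0_eq[of c W k] c k by simp
  then show ?thesis
    using False c by (simp add: eta_def zero_le_mult_iff)
qed

text \<open>The coefficients \<open>\<eta>\<^sub>k\<close> are, up to the factor \<open>c\<close>, the second differences of \<open>W\<close>,
  so they represent \<open>W\<close> on \<open>{0..n}\<close> in the basis \<open>V\<^sup>c\<^sub>k\<close>, whose second differences are
  concentrated at \<open>k\<close>.\<close>

lemma admissible_eq_sum_eta_Vc: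
  assumes adm: "admissible c n W" and c: "0 < c" and "y \<le> n" "n \<ge> 1"
  shows "W y = (\<Sum>k=1..n. eta c n W k * Vc c k y)"
  using assms(3)
proof (induction y)
  case 0
  then show ?case
    using adm by (simp add: admissible_def Vc_def)
next
  case (Suc y)
  have W0: "W 0 = 0"
    using adm by (simp add: admissible_def)
  have "(\<Sum>k=1..n. eta c n W k * Vc c k (Suc y)) - (\<Sum>k=1..n. eta c n W k * Vc c k y)
      = (\<Sum>k=1..n. eta c n W k * (1 - c) + (if y < k then c * eta c n W k else 0))"
    unfolding sum_subtractf[symmetric] by (intro sum.cong) (auto simp: Vc_def algebra_simps)
  also have "\<dots> = (\<Sum>k=1..n. eta c n W k * (1 - c)) + (\<Sum>k\<in>{k\<in>{1..n}. y < k}. c * eta c n W k)"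
    by (simp only: sum.distrib sum.inter_filter[OF finite_atLeastAtMost])
  also have "{k\<in>{1..n}. y < k} = {Suc y..n}"
    by auto
  also have "(\<Sum>k=1..n. eta c n W k * (1 - c)) + (\<Sum>k=Suc y..n. c * eta c n W k) = W (Suc y) - W y"
    using sum_eta[OF assms(4), of c W] sum_eta_above[of c W y n] c W0 Suc.prems
    by (simp add: sum_distrib_left[symmetric] sum_distrib_right[symmetric])
  finally show ?case
    using Suc by simp
qed

lemma mech_smooth:
  assumes adm: "admissible c n W" and c: "0 < c" "c \<le> 1" and "n \<ge> 1" and "a + x + b \<le> n"
  shows "W (x + b) + real a * mech c n W (a + x) - real b * mech c n W (Suc (a + x))
         \<le> inverse (1 - c / exp 1) * W (a + x)"
proof -
  let ?q = "inverse (1 - c / exp 1)"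
  have "W (x + b) + real a * mech c n W (a + x) - real b * mech c n W (Suc (a + x))
     = (\<Sum>k=1..n. eta c n W k * (Vc c k (x + b) + real a * Fc c k (a + x) - real b * Fc c k (Suc (a + x))))"
    using admissible_eq_sum_eta_Vc[OF adm c(1) _ assms(4), of "x + b"] assms(5)
    by (simp add: mech_def sum_distrib_left sum.distrib sum_subtractf algebra_simps)
  also have "\<dots> \<le> (\<Sum>k=1..n. eta c n W k * (?q * Vc c k (a + x)))"
  proof (rule sum_mono)
    fix k
    assume k: "k \<in> {1..n}"
    have "Vc c k (x + b) + real a * Fc c k (a + x) - real b * Fc c k (Suc (a + x)) \<le> rho c k * Vc c k (a + x)"
      using k c by (intro Fc_smooth) auto
    also have "\<dots> \<le> ?q * Vc c k (a + x)"
      using k c rho_le[of k c] Vc_nonneg[of c k] by (intro mult_right_mono) auto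
    finally show "eta c n W k * (Vc c k (x + b) + real a * Fc c k (a + x) - real b * Fc c k (Suc (a + x)))
        \<le> eta c n W k * (?q * Vc c k (a + x))"
      using eta_nonneg[OF adm c(1)] k by (intro mult_left_mono) auto
  qed
  also have "\<dots> = ?q * W (a + x)"
    using admissible_eq_sum_eta_Vc[OF adm c(1) _ assms(4), of "a + x"] assms(5)
    by (simp add: sum_distrib_left algebra_simps)
  finally show ?thesis .
qed

section \<open>Smoothness bounds the price of anarchy\<close>

lemma sum_players_swap:
  fixes m :: nat
  assumes "finite R" "\<And>i. i < m \<Longrightarrow> S i \<subseteq> R"
  shows "(\<Sum>i<m. \<Sum>r\<in>S i. g i r) = (\<Sum>r\<in>R. \<Sum>i\<in>{i. i < m \<and> r \<in> S i}. g i r)"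
proof -
  have "(\<Sum>i<m. \<Sum>r\<in>S i. g i r) = (\<Sum>i<m. \<Sum>r\<in>{r. r \<in> R \<and> r \<in> S i}. g i r)"
    using assms(2) by (intro sum.cong refl) blast
  also have "\<dots> = (\<Sum>r\<in>R. \<Sum>i\<in>{i. i \<in> {..<m} \<and> r \<in> S i}. g i r)"
    by (rule sum.swap_restrict) (simp_all add: assms(1))
  finally show ?thesis
    by simp
qed

lemma load_fun_upd:
  assumes "i < m" "r \<in> S"
  shows "load m (a(i := S)) r = (if r \<in> a i then load m a r else Suc (load m a r))"
proof -
  have "{j. j < m \<and> r \<in> (a(i := S)) j} = insert i {j. j < m \<and> r \<in> a j}"
    using assms by auto
  then show ?thesis
    unfolding load_def using assms by (auto simp: insert_absorb)
qed

lemma welfare_eq_sum_resources: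
  assumes "finite R" "\<And>i. i < m \<Longrightarrow> a i \<subseteq> R" "\<And>r. r \<in> R \<Longrightarrow> Wr r 0 = 0"
  shows "welfare m Wr a = (\<Sum>r\<in>R. Wr r (load m a r))"
  unfolding welfare_def
proof (rule sum.mono_neutral_left)
  show "\<forall>r\<in>R - (\<Union>i<m. a i). Wr r (load m a r) = 0"
  proof
    fix r
    assume r: "r \<in> R - (\<Union>i<m. a i)"
    then have "load m a r = 0"
      by (auto simp: load_def)
    then show "Wr r (load m a r) = 0"
      using assms(3) r by simp
  qed
qed (use assms in auto)

lemma card_players_split:
  fixes P Q :: "nat \<Rightarrow> bool"
  shows "card {i. i < m \<and> P i} = card {i. i < m \<and> P i \<and> \<not> Q i} + card {i. i < m \<and> P i \<and> Q i}"
proof -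
  have "{i. i < m \<and> P i} = {i. i < m \<and> P i \<and> \<not> Q i} \<union> {i. i < m \<and> P i \<and> Q i}"
    by auto
  moreover have "{i. i < m \<and> P i \<and> \<not> Q i} \<inter> {i. i < m \<and> P i \<and> Q i} = {}"
    by auto
  ultimately show ?thesis
    by (simp add: card_Un_disjoint)
qed

lemma card_players_three_le:
  fixes P Q :: "nat \<Rightarrow> bool"
  shows "card {i. i < m \<and> P i \<and> \<not> Q i} + card {i. i < m \<and> P i \<and> Q i} + card {i. i < m \<and> \<not> P i \<and> Q i} \<le> m"
proof -
  let ?A = "{i. i < m \<and> P i \<and> \<not> Q i}" and ?B = "{i. i < m \<and> P i \<and> Q i}"
    and ?C = "{i. i < m \<and> \<not> P i \<and> Q i}"
  have "card (?A \<union> ?B \<union> ?C) = card ?A + card ?B + card ?C"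
    by (subst card_Un_disjoint, auto)+
  moreover have "card (?A \<union> ?B \<union> ?C) \<le> card {..<m}"
    by (rule card_mono) auto
  ultimately show ?thesis
    by simp
qed

lemma sum_utility_eq:
  assumes "finite R" "\<And>i. i < m \<Longrightarrow> a i \<subseteq> R"
  shows "(\<Sum>i<m. utility m F a i) = (\<Sum>r\<in>R. real (load m a r) * F r (load m a r))"
proof -
  have "(\<Sum>i<m. utility m F a i) = (\<Sum>r\<in>R. \<Sum>i\<in>{i. i < m \<and> r \<in> a i}. F r (load m a r))"
    unfolding utility_def by (rule sum_players_swap[OF assms])
  then show ?thesis
    by (simp add: load_def)
qed

lemma sum_deviation_utility_eq:
  assumes "finite R" "\<And>i. i < m \<Longrightarrow> a' i \<subseteq> R"
  shows "(\<Sum>i<m. utility m F (a(i := a' i)) i)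
    = (\<Sum>r\<in>R. real (card {i. i < m \<and> r \<in> a i \<and> r \<in> a' i}) * F r (load m a r)
        + real (card {i. i < m \<and> r \<notin> a i \<and> r \<in> a' i}) * F r (Suc (load m a r)))"
proof -
  have "(\<Sum>i<m. utility m F (a(i := a' i)) i)
      = (\<Sum>i<m. \<Sum>r\<in>a' i. if r \<in> a i then F r (load m a r) else F r (Suc (load m a r)))"
    unfolding utility_def using load_fun_upd[of _ m _ "a' _" a] by (intro sum.cong) auto
  also have "\<dots> = (\<Sum>r\<in>R. \<Sum>i\<in>{i. i < m \<and> r \<in> a' i}. if r \<in> a i then F r (load m a r) else F r (Suc (load m a r)))"
    by (rule sum_players_swap[OF assms])
  also have "\<dots> = (\<Sum>r\<in>R. real (card {i. i < m \<and> r \<in> a i \<and> r \<in> a' i}) * F r (load m a r)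
        + real (card {i. i < m \<and> r \<notin> a i \<and> r \<in> a' i}) * F r (Suc (load m a r)))"
  proof (intro sum.cong refl)
    fix r
    have "{i\<in>{i. i < m \<and> r \<in> a' i}. r \<in> a i} = {i. i < m \<and> r \<in> a i \<and> r \<in> a' i}"
      "{i\<in>{i. i < m \<and> r \<in> a' i}. r \<notin> a i} = {i. i < m \<and> r \<notin> a i \<and> r \<in> a' i}"
      by auto
    then show "(\<Sum>i\<in>{i. i < m \<and> r \<in> a' i}. if r \<in> a i then F r (load m a r) else F r (Suc (load m a r)))
        = real (card {i. i < m \<and> r \<in> a i \<and> r \<in> a' i}) * F r (load m a r)
        + real (card {i. i < m \<and> r \<notin> a i \<and> r \<in> a' i}) * F r (Suc (load m a r))"
      by (simp add: sum.If_cases Int_def)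
  qed
  finally show ?thesis .
qed

lemma welfare_le_of_smooth:
  fixes F Wr :: "'r \<Rightarrow> nat \<Rightarrow> real"
  assumes game: "is_game m R A" and ne: "is_NE m A F a" and a': "a' \<in> allocs m A"
    and W0: "\<And>r. r \<in> R \<Longrightarrow> Wr r 0 = 0"
    and smooth: "\<And>r x y z. r \<in> R \<Longrightarrow> x + y + z \<le> m \<Longrightarrow>
      Wr r (y + z) + real x * F r (x + y) - real z * F r (Suc (x + y)) \<le> q * Wr r (x + y)"
  shows "welfare m Wr a' \<le> q * welfare m Wr a"
proof -
  have finR: "finite R"
    using game by (simp add: is_game_def)
  have aR: "\<And>i. i < m \<Longrightarrow> a i \<subseteq> R" and a'R: "\<And>i. i < m \<Longrightarrow> a' i \<subseteq> R"
    using game ne a' unfolding is_game_def is_NE_def allocs_def by blast+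
  define x where "x r = card {i. i < m \<and> r \<in> a i \<and> r \<notin> a' i}" for r
  define y where "y r = card {i. i < m \<and> r \<in> a i \<and> r \<in> a' i}" for r
  define z where "z r = card {i. i < m \<and> r \<notin> a i \<and> r \<in> a' i}" for r
  have load_a: "load m a r = x r + y r" for r
    unfolding load_def x_def y_def by (rule card_players_split)
  have load_a': "load m a' r = y r + z r" for r
    using card_players_split[of m "\<lambda>i. r \<in> a' i" "\<lambda>i. r \<in> a i"]
    unfolding load_def y_def z_def by (simp add: conj_commute conj_left_commute)
  have welfare_a: "welfare m Wr a = (\<Sum>r\<in>R. Wr r (load m a r))"
    using finR aR W0 by (rule welfare_eq_sum_resources)
  have welfare_a': "welfare m Wr a' = (\<Sum>r\<in>R. Wr r (load m a' r))"
    using finR a'R W0 by (rule welfare_eq_sum_resources)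
  have sum_utilities: "(\<Sum>i<m. utility m F a i) = (\<Sum>r\<in>R. real (x r + y r) * F r (x r + y r))"
    using sum_utility_eq[OF finR aR, where F = F] by (simp add: load_a)
  have sum_deviations: "(\<Sum>i<m. utility m F (a(i := a' i)) i)
      = (\<Sum>r\<in>R. real (y r) * F r (load m a r) + real (z r) * F r (Suc (load m a r)))"
    unfolding y_def z_def by (rule sum_deviation_utility_eq[OF finR a'R])
  have deviations: "(\<Sum>i<m. utility m F (a(i := a' i)) i) \<le> (\<Sum>i<m. utility m F a i)"
    using ne a' unfolding is_NE_def allocs_def by (intro sum_mono) auto
  have "welfare m Wr a' \<le> (\<Sum>r\<in>R. q * Wr r (load m a r) - real (x r) * F r (load m a r)
      + real (z r) * F r (Suc (load m a r)))"
    unfolding welfare_a' load_a load_a'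
  proof (rule sum_mono)
    fix r
    assume "r \<in> R"
    moreover have "x r + y r + z r \<le> m"
      using card_players_three_le[of m "\<lambda>i. r \<in> a i" "\<lambda>i. r \<in> a' i"] by (simp add: x_def y_def z_def)
    ultimately show "Wr r (y r + z r) \<le> q * Wr r (x r + y r) - real (x r) * F r (x r + y r)
        + real (z r) * F r (Suc (x r + y r))"
      using smooth[of r "x r" "y r" "z r"] by simp
  qed
  also have "\<dots> = q * welfare m Wr a
      + ((\<Sum>i<m. utility m F (a(i := a' i)) i) - (\<Sum>i<m. utility m F a i))"
    unfolding welfare_a sum_utilities sum_deviations load_a
    by (simp add: sum.distrib sum_subtractf sum_distrib_left algebra_simps)
  also have "\<dots> \<le> q * welfare m Wr a"
    using deviations by simp
  finally show ?thesis .
qed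

lemma mech_poa_bound:
  assumes c: "0 < c" "c \<le> 1" and "2 \<le> n" "m \<le> n"
    and game: "is_game m R A" and adm: "\<forall>r\<in>R. admissible c n (Wr r)"
    and ne: "is_NE m A (\<lambda>r. mech c n (Wr r)) a" and a': "a' \<in> allocs m A"
  shows "(1 - c / exp 1) * welfare m Wr a' \<le> welfare m Wr a"
proof -
  have "welfare m Wr a' \<le> inverse (1 - c / exp 1) * welfare m Wr a"
    using game ne a'
  proof (rule welfare_le_of_smooth)
    show "Wr r 0 = 0" if "r \<in> R" for r
      using adm that by (simp add: admissible_def)
    show "Wr r (y + z) + real x * mech c n (Wr r) (x + y) - real z * mech c n (Wr r) (Suc (x + y))
        \<le> inverse (1 - c / exp 1) * Wr r (x + y)" if "r \<in> R" "x + y + z \<le> m" for r x y z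
      using mech_smooth[of c n "Wr r" x y z] adm that assms by simp
  qed
  then show ?thesis
    using one_minus_c_div_e_pos[OF c(2)] by (simp add: field_simps)
qed

section \<open>Games with inefficient equilibria\<close>

text \<open>Resources are natural numbers; the games below use triples coded by \<open>prod_encode\<close>,
  whose first component tags shared (\<open>0\<close>) and private (\<open>2\<close>) resources.\<close>

definition enc :: "nat \<Rightarrow> nat \<Rightarrow> nat \<Rightarrow> nat" where
  "enc x y z = prod_encode (x, prod_encode (y, z))"

lemma enc_eq_iff [simp]: "enc x y z = enc x' y' z' \<longleftrightarrow> x = x' \<and> y = y' \<and> z = z'"
  by (simp add: enc_def prod_encode_eq)

lemma sum_image_const:
  assumes "inj_on g S" "\<And>x. x \<in> S \<Longrightarrow> h (g x) = (v :: real)"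
  shows "(\<Sum>r\<in>g ` S. h r) = real (card S) * v"
  using assms by (simp add: sum.reindex)

lemma card_less_neq: "s < m \<Longrightarrow> card {i. i < m \<and> i \<noteq> s} = m - 1"
proof -
  assume "s < m"
  moreover have "{i. i < m \<and> i \<noteq> s} = {..<m} - {s}"
    by auto
  ultimately show ?thesis
    by simp
qed

context
  fixes j t K :: nat
begin

definition cyc_eq_action :: "nat \<Rightarrow> nat set" where
  "cyc_eq_action i = (\<lambda>(s, q). enc 0 s q) ` ({s. s < Suc j \<and> s \<noteq> i} \<times> {..<t})"

definition cyc_own :: "nat \<Rightarrow> nat set" where
  "cyc_own i = enc 0 i ` {..<t}"

definition cyc_private :: "nat \<Rightarrow> nat set" where
  "cyc_private i = enc 2 i ` {..<K}"

definition cyc_opt_action :: "nat \<Rightarrow> nat set" where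
  "cyc_opt_action i = cyc_own i \<union> cyc_private i"

definition cyc_resources :: "nat set" where
  "cyc_resources = (\<lambda>(s, q). enc 0 s q) ` ({..<Suc j} \<times> {..<t}) \<union> (\<lambda>(s, q). enc 2 s q) ` ({..<Suc j} \<times> {..<K})"

definition cyc_actions :: "nat \<Rightarrow> nat set set" where
  "cyc_actions i = {cyc_eq_action i, cyc_opt_action i}"

definition cyc_eq :: "nat \<Rightarrow> nat set" where
  "cyc_eq i = (if i < Suc j then cyc_eq_action i else {})"

definition cyc_opt :: "nat \<Rightarrow> nat set" where
  "cyc_opt i = (if i < Suc j then cyc_opt_action i else {})"

lemma enc_mem_cyc_eq_action: "enc x s q \<in> cyc_eq_action i \<longleftrightarrow> x = 0 \<and> s < Suc j \<and> s \<noteq> i \<and> q < t"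
  unfolding cyc_eq_action_def by auto

lemma enc_mem_cyc_opt_action: "enc x s q \<in> cyc_opt_action i \<longleftrightarrow> s = i \<and> (x = 0 \<and> q < t \<or> x = 2 \<and> q < K)"
  unfolding cyc_opt_action_def cyc_own_def cyc_private_def by auto

lemma load_cyc_eq:
  assumes "s < Suc j" "q < t"
  shows "load (Suc j) cyc_eq (enc 0 s q) = j"
proof -
  have "{i. i < Suc j \<and> enc 0 s q \<in> cyc_eq i} = {i. i < Suc j \<and> i \<noteq> s}"
    using assms by (auto simp: cyc_eq_def enc_mem_cyc_eq_action)
  then show ?thesis
    using card_less_neq[OF assms(1)] by (simp add: load_def)
qed

lemma load_cyc_opt: "s < Suc j \<Longrightarrow> enc x s q \<in> cyc_opt_action s \<Longrightarrow> load (Suc j) cyc_opt (enc x s q) = 1"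
proof -
  assume "s < Suc j" "enc x s q \<in> cyc_opt_action s"
  then have "{i. i < Suc j \<and> enc x s q \<in> cyc_opt i} = {s}"
    by (auto simp: cyc_opt_def enc_mem_cyc_opt_action)
  then show ?thesis
    by (simp add: load_def)
qed

lemma load_cyc_deviation_own:
  assumes "i < Suc j" "q < t"
  shows "load (Suc j) (cyc_eq(i := cyc_opt_action i)) (enc 0 i q) = Suc j"
proof -
  have "{i'. i' < Suc j \<and> enc 0 i q \<in> (cyc_eq(i := cyc_opt_action i)) i'} = {..<Suc j}"
    using assms by (auto simp: cyc_eq_def enc_mem_cyc_eq_action enc_mem_cyc_opt_action)
  then show ?thesis
    by (simp add: load_def)
qed

lemma load_cyc_deviation_private:
  assumes "i < Suc j" "p < K"
  shows "load (Suc j) (cyc_eq(i := cyc_opt_action i)) (enc 2 i p) = 1"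
proof -
  have "{i'. i' < Suc j \<and> enc 2 i p \<in> (cyc_eq(i := cyc_opt_action i)) i'} = {i}"
    using assms by (auto simp: cyc_eq_def enc_mem_cyc_eq_action enc_mem_cyc_opt_action)
  then show ?thesis
    by (simp add: load_def)
qed

lemma utility_cyc_eq:
  assumes "i < Suc j"
  shows "utility (Suc j) (\<lambda>r. f) cyc_eq i = real j * real t * f j"
proof -
  have "utility (Suc j) (\<lambda>r. f) cyc_eq i = (\<Sum>r\<in>cyc_eq_action i. f (load (Suc j) cyc_eq r))"
    using assms by (simp add: utility_def cyc_eq_def)
  also have "\<dots> = real (card ({s. s < Suc j \<and> s \<noteq> i} \<times> {..<t})) * f j"
    unfolding cyc_eq_action_def by (rule sum_image_const) (auto simp: inj_on_def load_cyc_eq)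
  finally show ?thesis
    using card_less_neq[OF assms] by (simp add: card_cartesian_product)
qed

lemma utility_cyc_deviation:
  assumes "i < Suc j"
  shows "utility (Suc j) (\<lambda>r. f) (cyc_eq(i := cyc_opt_action i)) i = real t * f (Suc j) + real K * f 1"
proof -
  let ?a = "cyc_eq(i := cyc_opt_action i)"
  have "utility (Suc j) (\<lambda>r. f) ?a i = (\<Sum>r\<in>cyc_own i. f (load (Suc j) ?a r)) + (\<Sum>r\<in>cyc_private i. f (load (Suc j) ?a r))"
    unfolding utility_def cyc_opt_action_def
    by (simp, rule sum.union_disjoint) (auto simp: cyc_own_def cyc_private_def)
  also have "(\<Sum>r\<in>cyc_own i. f (load (Suc j) ?a r)) = real t * f (Suc j)"
    unfolding cyc_own_def using assms
    by (subst sum_image_const[where v = "f (Suc j)"]) (auto simp: inj_on_def load_cyc_deviation_own)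
  also have "(\<Sum>r\<in>cyc_private i. f (load (Suc j) ?a r)) = real K * f 1"
    unfolding cyc_private_def using assms
    by (subst sum_image_const[where v = "f 1"]) (auto simp: inj_on_def load_cyc_deviation_private)
  finally show ?thesis .
qed

lemma Union_cyc_eq:
  assumes "j \<ge> 1"
  shows "(\<Union>i<Suc j. cyc_eq i) = (\<lambda>(s, q). enc 0 s q) ` ({..<Suc j} \<times> {..<t})"
proof
  show "(\<lambda>(s, q). enc 0 s q) ` ({..<Suc j} \<times> {..<t}) \<subseteq> (\<Union>i<Suc j. cyc_eq i)"
  proof
    fix r
    assume "r \<in> (\<lambda>(s, q). enc 0 s q) ` ({..<Suc j} \<times> {..<t})"
    then obtain s q where r: "r = enc 0 s q" "s < Suc j" "q < t"
      by auto
    define i :: nat where "i = (if s = 0 then 1 else 0)"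
    have "i < Suc j" "i \<noteq> s"
      using assms by (auto simp: i_def)
    then show "r \<in> (\<Union>i<Suc j. cyc_eq i)"
      using r by (auto simp: cyc_eq_def enc_mem_cyc_eq_action)
  qed
qed (auto simp: cyc_eq_def cyc_eq_action_def)

lemma welfare_cyc_eq:
  assumes "j \<ge> 1"
  shows "welfare (Suc j) (\<lambda>r. W) cyc_eq = real (Suc j) * real t * W j"
  unfolding welfare_def Union_cyc_eq[OF assms]
  by (subst sum_image_const[where v = "W j"])
    (auto simp: inj_on_def load_cyc_eq card_cartesian_product algebra_simps)

lemma welfare_cyc_opt: "welfare (Suc j) (\<lambda>r. W) cyc_opt = real (Suc j) * (real t + real K) * W 1"
proof -
  have U: "(\<Union>i<Suc j. cyc_opt i)
      = (\<lambda>(s, q). enc 0 s q) ` ({..<Suc j} \<times> {..<t}) \<union> (\<lambda>(s, q). enc 2 s q) ` ({..<Suc j} \<times> {..<K})"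
    by (auto simp: cyc_opt_def cyc_opt_action_def cyc_own_def cyc_private_def)
  have "welfare (Suc j) (\<lambda>r. W) cyc_opt
      = (\<Sum>r\<in>(\<lambda>(s, q). enc 0 s q) ` ({..<Suc j} \<times> {..<t}). W (load (Suc j) cyc_opt r))
        + (\<Sum>r\<in>(\<lambda>(s, q). enc 2 s q) ` ({..<Suc j} \<times> {..<K}). W (load (Suc j) cyc_opt r))"
    unfolding welfare_def U by (rule sum.union_disjoint) auto
  also have "\<dots> = real (Suc j) * real t * W 1 + real (Suc j) * real K * W 1"
    by (subst (1 2) sum_image_const[where v = "W 1"])
      (auto simp: inj_on_def load_cyc_opt enc_mem_cyc_opt_action card_cartesian_product algebra_simps)
  finally show ?thesis
    by (simp add: algebra_simps)
qed

lemma cyc_game: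
  assumes "j \<ge> 1" and no_gain: "real t * f (Suc j) + real K * f 1 \<le> real j * real t * f j"
  shows "is_game (Suc j) cyc_resources cyc_actions" "is_NE (Suc j) cyc_actions (\<lambda>r. f) cyc_eq"
    "cyc_opt \<in> allocs (Suc j) cyc_actions"
    "welfare (Suc j) (\<lambda>r. W) cyc_eq = real (Suc j) * real t * W j"
    "welfare (Suc j) (\<lambda>r. W) cyc_opt = real (Suc j) * (real t + real K) * W 1"
proof -
  show "is_game (Suc j) cyc_resources cyc_actions"
    by (auto simp: is_game_def cyc_resources_def cyc_actions_def cyc_eq_action_def
        cyc_opt_action_def cyc_own_def cyc_private_def)
  show "cyc_opt \<in> allocs (Suc j) cyc_actions"
    by (simp add: allocs_def cyc_opt_def cyc_actions_def)
  have "cyc_eq \<in> allocs (Suc j) cyc_actions"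
    by (simp add: allocs_def cyc_eq_def cyc_actions_def)
  moreover have "utility (Suc j) (\<lambda>r. f) (cyc_eq(i := b)) i \<le> utility (Suc j) (\<lambda>r. f) cyc_eq i"
    if "i < Suc j" "b \<in> cyc_actions i" for i b
  proof (cases "b = cyc_eq_action i")
    case True
    then have "cyc_eq(i := b) = cyc_eq"
      using that by (auto simp: cyc_eq_def fun_eq_iff)
    then show ?thesis
      by simp
  next
    case False
    then have "b = cyc_opt_action i"
      using that by (simp add: cyc_actions_def)
    then show ?thesis
      using utility_cyc_deviation[OF that(1), of f] utility_cyc_eq[OF that(1), of f] no_gain by simp
  qed
  ultimately show "is_NE (Suc j) cyc_actions (\<lambda>r. f) cyc_eq"
    by (simp add: is_NE_def)
  show "welfare (Suc j) (\<lambda>r. W) cyc_eq = real (Suc j) * real t * W j"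
    by (rule welfare_cyc_eq[OF assms(1)])
  show "welfare (Suc j) (\<lambda>r. W) cyc_opt = real (Suc j) * (real t + real K) * W 1"
    by (rule welfare_cyc_opt)
qed

end

context
  fixes N K :: nat
begin

definition star_private :: "nat \<Rightarrow> nat set" where
  "star_private i = enc 2 i ` {..<K}"

definition star_resources :: "nat set" where
  "star_resources = insert (enc 0 0 0) ((\<lambda>(s, q). enc 2 s q) ` ({..<N} \<times> {..<K}))"

definition star_actions :: "nat \<Rightarrow> nat set set" where
  "star_actions i = {{enc 0 0 0}, star_private i}"

definition star_eq :: "nat \<Rightarrow> nat set" where
  "star_eq i = (if i < N then {enc 0 0 0} else {})"

definition star_opt :: "nat \<Rightarrow> nat set" where
  "star_opt i = (if i < N then star_private i else {})"

lemma load_star_eq: "load N star_eq (enc 0 0 0) = N"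
proof -
  have "{i. i < N \<and> enc 0 0 0 \<in> star_eq i} = {..<N}"
    by (auto simp: star_eq_def)
  then show ?thesis
    by (simp add: load_def)
qed

lemma load_star_private:
  assumes "i < N" "p < K" "a = star_opt \<or> a = star_eq(i := star_private i)"
  shows "load N a (enc 2 i p) = 1"
proof -
  have "{i'. i' < N \<and> enc 2 i p \<in> a i'} = {i}"
    using assms by (auto simp: star_eq_def star_opt_def star_private_def split: if_splits)
  then show ?thesis
    by (simp add: load_def)
qed

lemma star_game:
  assumes "N \<ge> 1" and no_gain: "real K * f 1 \<le> f N"
  shows "is_game N star_resources star_actions" "is_NE N star_actions (\<lambda>r. f) star_eq"
    "star_opt \<in> allocs N star_actions"
    "welfare N (\<lambda>r. W) star_eq = W N"
    "welfare N (\<lambda>r. W) star_opt = real N * real K * W 1"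
proof -
  show "is_game N star_resources star_actions"
    by (auto simp: is_game_def star_resources_def star_actions_def star_private_def)
  show "star_opt \<in> allocs N star_actions"
    by (simp add: allocs_def star_opt_def star_actions_def)
  have "star_eq \<in> allocs N star_actions"
    by (simp add: allocs_def star_eq_def star_actions_def)
  moreover have "utility N (\<lambda>r. f) (star_eq(i := b)) i \<le> utility N (\<lambda>r. f) star_eq i"
    if "i < N" "b \<in> star_actions i" for i b
  proof (cases "b = {enc 0 0 0}")
    case True
    then have "star_eq(i := b) = star_eq"
      using that by (auto simp: star_eq_def fun_eq_iff)
    then show ?thesis
      by simp
  next
    case False
    then have "b = star_private i"
      using that by (simp add: star_actions_def)
    moreover have "utility N (\<lambda>r. f) (star_eq(i := star_private i)) i = real K * f 1"
      unfolding utility_def fun_upd_same star_private_def using that(1)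
      by (subst sum_image_const[where v = "f 1"])
        (auto simp: inj_on_def load_star_private star_private_def)
    moreover have "utility N (\<lambda>r. f) star_eq i = f N"
      using that(1) load_star_eq by (simp add: utility_def star_eq_def)
    ultimately show ?thesis
      using no_gain by simp
  qed
  ultimately show "is_NE N star_actions (\<lambda>r. f) star_eq"
    by (simp add: is_NE_def)
  have "(\<Union>i<N. star_eq i) = {enc 0 0 0}"
    using assms(1) by (auto simp: star_eq_def lessThan_empty_iff)
  then show "welfare N (\<lambda>r. W) star_eq = W N"
    by (simp add: welfare_def load_star_eq)
  have U: "(\<Union>i<N. star_opt i) = (\<lambda>(s, q). enc 2 s q) ` ({..<N} \<times> {..<K})"
    by (auto simp: star_opt_def star_private_def)
  show "welfare N (\<lambda>r. W) star_opt = real N * real K * W 1"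
    unfolding welfare_def U
    by (subst sum_image_const[where v = "W 1"]) (auto simp: inj_on_def load_star_private card_cartesian_product)
qed

end

section \<open>No mechanism does better than \<open>1 - c / e\<close>\<close>

definition affine_welfare :: "real \<Rightarrow> nat \<Rightarrow> real" where
  "affine_welfare c x = (if x = 0 then 0 else (1 - c) * real x + c)"

lemma affine_welfare_ge_1: "c \<le> 1 \<Longrightarrow> x \<ge> 1 \<Longrightarrow> affine_welfare c x \<ge> 1"
  using mult_left_mono[of 1 "real x" "1 - c"] by (simp add: affine_welfare_def)

lemma affine_welfare_le: "0 \<le> c \<Longrightarrow> affine_welfare c x \<le> real x"
  using mult_left_mono[of 1 "real x" c] by (simp add: affine_welfare_def algebra_simps)

lemma admissible_affine_welfare:
  assumes c: "0 < c" "c \<le> 1" and "m \<ge> 1"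
  shows "admissible c m (affine_welfare c)"
  unfolding admissible_def
proof (intro conjI allI impI)
  show "affine_welfare c 0 = 0"
    by (simp add: affine_welfare_def)
  show "affine_welfare c x > 0" if "x \<ge> 1" for x
    using affine_welfare_ge_1[OF c(2) that] by simp
  show "affine_welfare c (x + 2) - affine_welfare c (x + 1) \<le> affine_welfare c (x + 1) - affine_welfare c x" for x
    using c by (simp add: affine_welfare_def algebra_simps)
  show "mono (affine_welfare c)"
  proof (rule monoI)
    fix x y :: nat
    assume "x \<le> y"
    then show "affine_welfare c x \<le> affine_welfare c y"
      using c mult_left_mono[of "real x" "real y" "1 - c"] affine_welfare_ge_1[of c y]
      by (cases "x = 0") (auto simp: affine_welfare_def)
  qed
  show "1 - (affine_welfare c m - affine_welfare c (m - 1)) / affine_welfare c 1 \<le> c"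
    using c \<open>m \<ge> 1\<close> by (cases "m = 1") (auto simp: affine_welfare_def algebra_simps)
qed

lemma sum_pred_div_fact: "(\<Sum>i=1..j. (real i - 1) / fact i) = 1 - 1 / fact j"
proof (induction j)
  case (Suc j)
  have "(real (Suc j) - 1) / fact (Suc j) = 1 / fact j - 1 / (fact (Suc j) :: real)"
    by (simp add: divide_simps)
  then show ?case
    using Suc by simp
qed simp

lemma sum_inverse_fact_le: "(\<Sum>i=1..j. 1 / fact i) \<le> exp 1 - (1::real)"
proof -
  have "exp_partial 1 (Suc j) = 1 + (\<Sum>i=1..j. 1 / fact i)"
    by (simp add: exp_partial_def exp_term_def lessThan_Suc_atMost atMost_atLeast0
        sum.atLeast_Suc_atMost)
  then show ?thesis
    using exp_partial_le_exp[of 1 "Suc j"] by simp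
qed

definition equilibrium_ratio_below :: "(nat \<Rightarrow> real) \<Rightarrow> (nat \<Rightarrow> real) \<Rightarrow> real \<Rightarrow> bool" where
  "equilibrium_ratio_below W f \<theta> \<longleftrightarrow> (\<exists>m (R :: nat set) A a a'. 2 \<le> m \<and> is_game m R A
     \<and> is_NE m A (\<lambda>r. f) a \<and> a' \<in> allocs m A
     \<and> 0 < welfare m (\<lambda>r. W) a' \<and> welfare m (\<lambda>r. W) a < \<theta> * welfare m (\<lambda>r. W) a')"

lemma equilibrium_ratio_below_nonpos:
  assumes "f 1 \<le> 0" "W 1 > 0" "\<theta> > 0"
  shows "equilibrium_ratio_below W f \<theta>"
proof -
  have "real 0 * f (Suc 1) + real 1 * f 1 \<le> real 1 * real 0 * f 1"
    using assms by simp
  note game = cyc_game[where j = 1 and t = 0 and K = 1, OF _ this]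
  show ?thesis
    unfolding equilibrium_ratio_below_def
    by (intro exI[of _ "Suc 1"] exI[of _ "cyc_resources 1 0 1"] exI[of _ "cyc_actions 1 0 1"]
        exI[of _ "cyc_eq 1 0"] exI[of _ "cyc_opt 1 0 1"]) (use game assms in simp)
qed

text \<open>If \<open>f\<close> decreases fast somewhere, the cyclic game with \<open>t\<close> shared and about
  \<open>t (W j / s - 1)\<close> private resources per player has welfare ratio close to \<open>s\<close>.\<close>

lemma equilibrium_ratio_below_deficit:
  assumes s: "0 < s" "s < \<theta>" and j: "j \<ge> 1" "s \<le> W j" and W1: "W 1 = 1" and f1: "f 1 > 0"
    and deficit: "(W j / s - 1) * f 1 \<le> real j * f j - f (Suc j)"
  shows "equilibrium_ratio_below W f \<theta>"
proof -
  define \<gamma> where "\<gamma> = W j / s - 1"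
  define t where "t = nat \<lceil>\<theta> / (\<theta> - s)\<rceil> + 1"
  define K where "K = nat \<lfloor>real t * \<gamma>\<rfloor>"
  have \<gamma>: "\<gamma> \<ge> 0"
    using s j by (simp add: \<gamma>_def field_simps)
  have "\<theta> / (\<theta> - s) > 0"
    using s by simp
  moreover have "real (nat \<lceil>\<theta> / (\<theta> - s)\<rceil>) \<ge> \<theta> / (\<theta> - s)"
    by linarith
  ultimately have "real t \<ge> \<theta> / (\<theta> - s)" "real t \<ge> 1"
    unfolding t_def by linarith+
  then have t: "real t \<ge> 1" "real t * (\<theta> - s) \<ge> \<theta>"
    using s by (auto simp: pos_divide_le_eq)
  have "real t * \<gamma> \<ge> 0"
    using \<gamma> by simp
  then have K: "real K \<le> real t * \<gamma>" "real K > real t * \<gamma> - 1"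
    unfolding K_def by linarith+
  have "real K * f 1 \<le> real t * (\<gamma> * f 1)"
    using K f1 mult_right_mono[of "real K" "real t * \<gamma>" "f 1"] by simp
  also have "\<dots> \<le> real t * (real j * f j - f (Suc j))"
    using deficit by (intro mult_left_mono) (auto simp: \<gamma>_def)
  finally have "real t * f (Suc j) + real K * f 1 \<le> real j * real t * f j"
    by (simp add: algebra_simps)
  note game = cyc_game[OF j(1) this]
  define X where "X = real t * W j / s"
  have "X \<ge> real t"
    using s j mult_left_mono[of s "W j" "real t"] by (simp add: X_def field_simps)
  then have "X * (\<theta> - s) \<ge> real t * (\<theta> - s)"
    using s by (intro mult_right_mono) auto
  moreover have "X * s = real t * W j"
    using s by (simp add: X_def)
  ultimately have "real t * W j \<le> \<theta> * (X - 1)"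
    using t by (simp add: algebra_simps)
  also have "\<dots> < \<theta> * (real t + real K)"
    using K s by (intro mult_strict_left_mono) (auto simp: X_def \<gamma>_def field_simps)
  finally have "real (Suc j) * (real t * W j) < real (Suc j) * (\<theta> * (real t + real K))"
    by (intro mult_strict_left_mono) auto
  then have "real (Suc j) * (real t * W j) < \<theta> * (real (Suc j) * (real t + real K))"
    by (simp add: algebra_simps)
  moreover have "0 < real (Suc j) * (real t + real K)"
    using t by simp
  ultimately show ?thesis
    unfolding equilibrium_ratio_below_def
    by (intro exI[of _ "Suc j"] exI[of _ "cyc_resources j t K"] exI[of _ "cyc_actions j t K"]
        exI[of _ "cyc_eq j t"] exI[of _ "cyc_opt j t K"]) (use game j W1 in simp)
qed

lemma equilibrium_ratio_below_growth:
  assumes N: "N \<ge> 2" and growth: "2 * f 1 \<le> f N" and W: "W 1 = 1" "W N \<le> real N"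
    and \<theta>: "\<theta> > 1 / 2"
  shows "equilibrium_ratio_below W f \<theta>"
proof -
  have "real 2 * f 1 \<le> f N"
    using growth by simp
  note game = star_game[OF _ this]
  have "1 / 2 * (2 * real N) < \<theta> * (2 * real N)"
    using \<theta> N by (intro mult_strict_right_mono) auto
  then have "W N < \<theta> * (real N * 2 * W 1)"
    using W by simp
  with N show ?thesis
    unfolding equilibrium_ratio_below_def
    by (intro exI[of _ N] exI[of _ "star_resources N 2"] exI[of _ "star_actions 2"]
        exI[of _ "star_eq N"] exI[of _ "star_opt N 2"]) (use game W in simp)
qed

lemma deficit_recursion_lower_bound:
  assumes "\<And>j. j \<ge> 1 \<Longrightarrow> real j * f j - f (Suc j) < g j * f 1"
  shows "f (Suc j) \<ge> fact j * (1 - (\<Sum>i=1..j. g i / fact i)) * f 1"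
proof (induction j)
  case (Suc j)
  define T where "T = (\<Sum>i=1..j. g i / fact i)"
  have "real (Suc j) * fact j = (fact (Suc j) :: real)"
    by simp
  moreover have "fact (Suc j) * (g (Suc j) / fact (Suc j)) = g (Suc j)"
    by simp
  ultimately have "fact (Suc j) * (1 - (T + g (Suc j) / fact (Suc j))) * f 1
      = real (Suc j) * (fact j * (1 - T) * f 1) - g (Suc j) * f 1"
    by (simp only: algebra_simps) (simp add: algebra_simps)
  also have "\<dots> \<le> real (Suc j) * f (Suc j) - g (Suc j) * f 1"
    using Suc by (simp add: T_def)
  also have "\<dots> < f (Suc (Suc j))"
    using assms[of "Suc j"] by simp
  finally show ?case
    by (simp add: T_def)
qed simp

lemma sum_affine_welfare_deficit_le:
  assumes c: "c \<le> 1" and s: "0 < s" "s \<le> 1"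
  shows "(\<Sum>i=1..j. (affine_welfare c i / s - 1) / fact i) \<le> 1 - (exp 1 - (exp 1 - c) / s)"
proof -
  have "(affine_welfare c i / s - 1) / fact i
      = (1 - c) / s * ((real i - 1) / fact i) + (1 / s - 1) * (1 / fact i)" if "i \<ge> 1" for i
    using s that by (simp add: affine_welfare_def field_simps)
  then have "(\<Sum>i=1..j. (affine_welfare c i / s - 1) / fact i)
      = (1 - c) / s * (\<Sum>i=1..j. (real i - 1) / fact i) + (1 / s - 1) * (\<Sum>i=1..j. 1 / fact i)"
    by (simp add: sum_distrib_left sum.distrib[symmetric])
  also have "\<dots> \<le> (1 - c) / s * 1 + (1 / s - 1) * (exp 1 - 1)"
    using c s sum_inverse_fact_le[of j] sum_pred_div_fact[of j]
    by (intro add_mono mult_left_mono) auto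
  also have "\<dots> = 1 - (exp 1 - (exp 1 - c) / s)"
    using s by (simp add: field_simps)
  finally show ?thesis .
qed

lemma factorial_growth_of_no_deficit:
  assumes c: "c \<le> 1" and s: "1 - c / exp 1 < s" "s \<le> 1" and f1: "f 1 > 0"
    and no_deficit: "\<And>j. j \<ge> 1 \<Longrightarrow> real j * f j - f (Suc j) < (affine_welfare c j / s - 1) * f 1"
  obtains N where "N \<ge> 2" "2 * f 1 \<le> f N"
proof -
  define \<delta> where "\<delta> = exp 1 - (exp 1 - c) / s"
  have "s > 0"
    using s one_minus_c_div_e_pos[OF c] by linarith
  have "exp 1 - c < exp 1 * s"
    using s by (simp add: field_simps)
  then have \<delta>: "\<delta> > 0"
    using \<open>s > 0\<close> by (simp add: \<delta>_def field_simps)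
  define j where "j = nat \<lceil>2 / \<delta>\<rceil> + 1"
  have "real j \<ge> 2 / \<delta>"
    unfolding j_def by linarith
  then have "fact j \<ge> 2 / \<delta>"
    using fact_ge_self[of j] by (metis of_nat_fact of_nat_le_iff order_trans)
  then have "fact j * \<delta> \<ge> 2"
    using \<delta> by (simp add: field_simps)
  moreover have "fact j * (1 - (\<Sum>i=1..j. (affine_welfare c i / s - 1) / fact i)) \<ge> fact j * \<delta>"
    using sum_affine_welfare_deficit_le[OF c \<open>s > 0\<close> s(2), of j] by (simp add: \<delta>_def)
  ultimately have "fact j * (1 - (\<Sum>i=1..j. (affine_welfare c i / s - 1) / fact i)) \<ge> 2"
    by linarith
  then have "fact j * (1 - (\<Sum>i=1..j. (affine_welfare c i / s - 1) / fact i)) * f 1 \<ge> 2 * f 1"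
    using f1 by (intro mult_right_mono) auto
  then have "2 * f 1 \<le> f (Suc j)"
    using deficit_recursion_lower_bound[of f "\<lambda>j. affine_welfare c j / s - 1", OF no_deficit, of j]
    by linarith
  then show ?thesis
    using that[of "Suc j"] by (simp add: j_def)
qed

lemma equilibrium_ratio_below_affine_welfare:
  assumes c: "0 < c" "c \<le> 1" and "\<epsilon> > 0"
  shows "equilibrium_ratio_below (affine_welfare c) f (1 - c / exp 1 + \<epsilon>)"
proof -
  define \<mu> where "\<mu> = min \<epsilon> (c / exp 1)"
  define s where "s = 1 - c / exp 1 + \<mu> / 2"
  have "2 \<le> exp (1::real)"
    using exp_ge_add_one_self[of 1] by simp
  then have ce: "c / exp 1 \<le> 1 / 2"
    using c by (simp add: field_simps)
  have \<mu>: "0 < \<mu>" "\<mu> \<le> \<epsilon>" "\<mu> \<le> c / exp 1"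
    using \<open>\<epsilon> > 0\<close> c by (auto simp: \<mu>_def)
  have \<theta>: "1 - c / exp 1 + \<epsilon> > 1 / 2"
    and s: "1 - c / exp 1 < s" "s < 1 - c / exp 1 + \<epsilon>" "s \<le> 1" "s > 0"
    unfolding s_def by (use ce \<mu> in linarith)+
  consider "f 1 \<le> 0"
    | j where "f 1 > 0" "j \<ge> 1" "(affine_welfare c j / s - 1) * f 1 \<le> real j * f j - f (Suc j)"
    | "f 1 > 0" "\<And>j. j \<ge> 1 \<Longrightarrow> real j * f j - f (Suc j) < (affine_welfare c j / s - 1) * f 1"
    by (meson not_le)
  then show ?thesis
  proof cases
    case 1
    moreover have "1 - c / exp 1 + \<epsilon> > 0"
      using \<theta> by linarith
    ultimately show ?thesis
      by (intro equilibrium_ratio_below_nonpos) (auto simp: affine_welfare_def)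
  next
    case (2 j)
    then show ?thesis
      using s affine_welfare_ge_1[OF c(2), of j]
      by (intro equilibrium_ratio_below_deficit[of s]) (auto simp: affine_welfare_def)
  next
    case 3
    then obtain N where "N \<ge> 2" "2 * f 1 \<le> f N"
      using factorial_growth_of_no_deficit[OF c(2) s(1,3)] by blast
    then show ?thesis
      using \<theta> affine_welfare_le[of c N] c
      by (intro equilibrium_ratio_below_growth) (auto simp: affine_welfare_def)
  qed
qed

theorem theorem1:
  fixes c :: real
  assumes "0 < c" and "c \<le> 1"
  shows
   "(\<forall>n m (R :: 'r set) A Wr. 2 \<le> n \<longrightarrow> m \<le> n \<longrightarrow> is_game m R A \<longrightarrow>
        (\<forall>r\<in>R. admissible c n (Wr r)) \<longrightarrow>
        (\<forall>a a'. is_NE m A (\<lambda>r. mech c n (Wr r)) a \<longrightarrow> a' \<in> allocs m A \<longrightarrow>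
           (1 - c / exp 1) * welfare m Wr a' \<le> welfare m Wr a))
    \<and>
    (\<forall>Mech :: (nat \<Rightarrow> real) \<Rightarrow> nat \<Rightarrow> real. \<forall>\<epsilon>>0.
        \<exists>m (R :: nat set) A Wr. 2 \<le> m \<and> is_game m R A \<and>
          (\<forall>r\<in>R. admissible c m (Wr r)) \<and>
          (\<exists>a a'. is_NE m A (\<lambda>r. Mech (Wr r)) a \<and> a' \<in> allocs m A \<and>
             0 < welfare m Wr a' \<and>
             welfare m Wr a < (1 - c / exp 1 + \<epsilon>) * welfare m Wr a'))"
proof (intro conjI allI impI)
  show "(1 - c / exp 1) * welfare m Wr a' \<le> welfare m Wr a"
    if "2 \<le> n" "m \<le> n" "is_game m R A" "\<forall>r\<in>R. admissible c n (Wr r)"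
      "is_NE m A (\<lambda>r. mech c n (Wr r)) a" "a' \<in> allocs m A"
    for n m and R :: "'r set" and A Wr a a'
    using mech_poa_bound[OF assms that] .
  fix Mech :: "(nat \<Rightarrow> real) \<Rightarrow> nat \<Rightarrow> real" and \<epsilon> :: real
  assume "\<epsilon> > 0"
  then obtain m and R :: "nat set" and A a a' where "2 \<le> m" "is_game m R A"
    "is_NE m A (\<lambda>r. Mech (affine_welfare c)) a" "a' \<in> allocs m A"
    "0 < welfare m (\<lambda>r. affine_welfare c) a'"
    "welfare m (\<lambda>r. affine_welfare c) a < (1 - c / exp 1 + \<epsilon>) * welfare m (\<lambda>r. affine_welfare c) a'"
    using equilibrium_ratio_below_affine_welfare[OF assms, of \<epsilon> "Mech (affine_welfare c)"]
    unfolding equilibrium_ratio_below_def by blast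
  moreover have "\<forall>r\<in>R. admissible c m (affine_welfare c)"
    using admissible_affine_welfare[OF assms] \<open>2 \<le> m\<close> by simp
  ultimately show "\<exists>m (R :: nat set) A Wr. 2 \<le> m \<and> is_game m R A \<and>
          (\<forall>r\<in>R. admissible c m (Wr r)) \<and>
          (\<exists>a a'. is_NE m A (\<lambda>r. Mech (Wr r)) a \<and> a' \<in> allocs m A \<and>
             0 < welfare m Wr a' \<and>
             welfare m Wr a < (1 - c / exp 1 + \<epsilon>) * welfare m Wr a')"
    by (intro exI[of _ m] exI[of _ R] exI[of _ A] exI[of _ "\<lambda>r. affine_welfare c"]) blast
qed

end
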